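(* Let $n\ge1$, $\alpha\in(0,\infty)$, $t\in(0,\infty)$, $p\in(0,\infty]$, $r\in(1,\infty)$ and $q\in[1,\infty]$. Then $(KE_{q,r}^{\alpha,p})_t(\mathbb{R}^n)=(\dot{K}E_{q,r}^{\alpha,p})_t(\mathbb{R}^n)\cap(E_r^q)_t(\mathbb{R}^n)$, and for $f\in(\dot{K}E_{q,r}^{\alpha,p})_t(\mathbb{R}^n)\cap(E_r^q)_t(\mathbb{R}^n)$, $\|f\|_{(KE_{q,r}^{\alpha,p})_t(\mathbb{R}^n)}\sim\|f\|_{(\dot{K}E_{q,r}^{\alpha,p})_t(\mathbb{R}^n)}+\|f\|_{(E_r^q)_t(\mathbb{R}^n)}$, where $A\sim B$ means $C^{-1}B\le A\le CB$ for a constant $C>0$ independent of $f$.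
   Context: For $x\in\mathbb{R}^n$ and $s>0$, $B(x,s)$ is the Euclidean ball of centre $x$ and radius $s$, $|E|$ is Lebesgue measure and $\mathbf{1}_E$ the indicator of $E$. For $t\in(0,\infty)$, $r\in(1,\infty)$, $q\in[1,\infty]$, the slice space $(E_r^q)_t(\mathbb{R}^n)$ is the set of measurable $f$ on $\mathbb{R}^n$ with $\|f\|_{(E_r^q)_t(\mathbb{R}^n)}:=\Big\| x\mapsto\Big(\frac{1}{|B(x,t)|}\int_{B(x,t)}|f(y)|^r\,dy\Big)^{1/r}\Big\|_{L^q(\mathbb{R}^n)}<\infty$. For $k\in\mathbb{Z}$ let $B_k=\{x:|x|\le 2^k\}$ and $S_k=B_k\setminus B_{k-1}$. For $\alpha\in\mathbb{R}$, $p\in(0,\infty]$, the homogeneous Herz-slice space $(\dot{K}E_{q,r}^{\alpha,p})_t(\mathbb{R}^n)$ is the set of measurable $f$ with $\|f\|_{(\dot{K}E_{q,r}^{\alpha,p})_t}:=\Big(\sum_{k\in\mathbb{Z}}2^{k\alpha p}\|f\mathbf{1}_{S_k}\|_{(E_r^q)_t(\mathbb{R}^n)}^p\Big)^{1/p}<\infty$, and the non-homogeneous Herz-slice space $(KE_{q,r}^{\alpha,p})_t(\mathbb{R}^n)$ is the set of measurable $f$ with $\|f\|_{(KE_{q,r}^{\alpha,p})_t}:=\Big(\|f\mathbf{1}_{B_0}\|_{(E_r^q)_t(\mathbb{R}^n)}^p+\sum_{k=1}^{\infty}2^{k\alpha p}\|f\mathbf{1}_{S_k}\|_{(E_r^q)_t(\mathbb{R}^n)}^p\Big)^{1/p}<\infty$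 (the term $k=0$ uses $B_0$ in place of $S_0$), with the sums replaced by suprema when $p=\infty$. *)

theory Defs
  imports "HOL-Analysis.Analysis"
begin

text \<open>Real power on extended nonnegative reals (only used with positive exponents):
  infinity to a positive power is infinity.\<close>
definition epowr :: "ennreal \<Rightarrow> real \<Rightarrow> ennreal" where
  "epowr x a = (if x = \<infinity> then (if a > 0 then \<infinity> else if a = 0 then 1 else 0)
                else ennreal (enn2real x powr a))"

definition local_avg :: "real \<Rightarrow> real \<Rightarrow> ('a::euclidean_space \<Rightarrow> real) \<Rightarrow> 'a \<Rightarrow> ennreal" where
  "local_avg r t f x =
     epowr ((\<integral>\<^sup>+ y\<in>ball x t. ennreal (\<bar>f y\<bar> powr r) \<partial>lebesgue) / emeasure lebesgue (ball x t)) (1 / r)"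

definition Lq_norm :: "ennreal \<Rightarrow> ('a::euclidean_space \<Rightarrow> ennreal) \<Rightarrow> ennreal" where
  "Lq_norm q g = (if q = \<infinity> then Inf {C. AE x in lebesgue. g x \<le> C}
                  else epowr (\<integral>\<^sup>+ x. epowr (g x) (enn2real q) \<partial>lebesgue) (1 / enn2real q))"

definition slice_norm :: "ennreal \<Rightarrow> real \<Rightarrow> real \<Rightarrow> ('a::euclidean_space \<Rightarrow> real) \<Rightarrow> ennreal" where
  "slice_norm q r t f = Lq_norm q (local_avg r t f)"

definition slice_space :: "ennreal \<Rightarrow> real \<Rightarrow> real \<Rightarrow> ('a::euclidean_space \<Rightarrow> real) set" where
  "slice_space q r t = {f. f \<in> borel_measurable lebesgue \<and> slice_norm q r t f < \<infinity>}"

text \<open>Annuli S_k = B_k - B_{k-1}, B_k = {x. |x| \<le> 2^k}.\<close>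
definition annulus :: "int \<Rightarrow> ('a::euclidean_space) set" where
  "annulus k = {x. 2 powr (real_of_int k - 1) < norm x \<and> norm x \<le> 2 powr (real_of_int k)}"

definition hom_herz_norm :: "real \<Rightarrow> ennreal \<Rightarrow> ennreal \<Rightarrow> real \<Rightarrow> real \<Rightarrow> ('a::euclidean_space \<Rightarrow> real) \<Rightarrow> ennreal" where
  "hom_herz_norm \<alpha> p q r t f =
     (if p = \<infinity> then (SUP k::int. ennreal (2 powr (real_of_int k * \<alpha>))
                        * slice_norm q r t (\<lambda>x. indicator (annulus k) x * f x))
      else epowr (\<integral>\<^sup>+ k. ennreal (2 powr (real_of_int k * \<alpha> * enn2real p))
                 * epowr (slice_norm q r t (\<lambda>x. indicator (annulus k) x * f x)) (enn2real p)
               \<partial>(count_space (UNIV :: int set))) (1 / enn2real p))"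

definition hom_herz_space :: "real \<Rightarrow> ennreal \<Rightarrow> ennreal \<Rightarrow> real \<Rightarrow> real \<Rightarrow> ('a::euclidean_space \<Rightarrow> real) set" where
  "hom_herz_space \<alpha> p q r t = {f. f \<in> borel_measurable lebesgue \<and> hom_herz_norm \<alpha> p q r t f < \<infinity>}"

definition inhom_herz_norm :: "real \<Rightarrow> ennreal \<Rightarrow> ennreal \<Rightarrow> real \<Rightarrow> real \<Rightarrow> ('a::euclidean_space \<Rightarrow> real) \<Rightarrow> ennreal" where
  "inhom_herz_norm \<alpha> p q r t f =
     (if p = \<infinity> then max (slice_norm q r t (\<lambda>x. indicator (cball 0 1) x * f x))
                         (SUP k\<in>{1::nat..}. ennreal (2 powr (real k * \<alpha>))
                            * slice_norm q r t (\<lambda>x. indicator (annulus (int k)) x * f x))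
      else epowr (epowr (slice_norm q r t (\<lambda>x. indicator (cball 0 1) x * f x)) (enn2real p)
                  + (\<Sum>k. ennreal (2 powr (real (Suc k) * \<alpha> * enn2real p))
                       * epowr (slice_norm q r t (\<lambda>x. indicator (annulus (int (Suc k))) x * f x)) (enn2real p)))
                 (1 / enn2real p))"

definition inhom_herz_space :: "real \<Rightarrow> ennreal \<Rightarrow> ennreal \<Rightarrow> real \<Rightarrow> real \<Rightarrow> ('a::euclidean_space \<Rightarrow> real) set" where
  "inhom_herz_space \<alpha> p q r t = {f. f \<in> borel_measurable lebesgue \<and> inhom_herz_norm \<alpha> p q r t f < \<infinity>}"

end

theory Submission
  imports Defs
begin

text \<open>Both Herz norms share the terms \<open>\<parallel>f \<one>\<^sub>S\<^sub>k\<parallel>\<close>, \<open>k \<ge> 1\<close>, and differ only inside the unit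
  ball \<open>B\<^sub>0\<close>. Since \<open>\<parallel>f \<one>\<^sub>B\<^sub>0\<parallel> \<le> \<parallel>f\<parallel>\<close>, the inhomogeneous norm is bounded by the homogeneous
  norm plus the slice norm. Conversely, the homogeneous terms with \<open>k \<le> 0\<close> concern annuli inside
  \<open>B\<^sub>0\<close> and carry weights \<open>2\<^sup>k\<^sup>\<alpha>\<close> that sum geometrically as \<open>\<alpha> > 0\<close>; and the slice norm of \<open>f\<close>
  is bounded by splitting \<open>f\<close> over \<open>B\<^sub>0\<close> and the \<open>S\<^sub>k\<close>, whose pieces have norms at most
  \<open>2\<^sup>-\<^sup>k\<^sup>\<alpha>\<close> times the inhomogeneous norm. Summing these pieces needs two facts: the \<open>r\<close>-th root
  in the local average is subadditive, and the \<open>L\<^sup>q\<close> norm of a series whose terms decay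
  geometrically is controlled by Hoelder's inequality with weights \<open>(1 - \<rho>) \<rho>\<^sup>k\<close>.\<close>

section \<open>Real powers of extended nonnegative reals\<close>

lemma epowr_ennreal: "0 \<le> x \<Longrightarrow> epowr (ennreal x) a = ennreal (x powr a)"
  by (simp add: epowr_def)

lemma epowr_top: "a > 0 \<Longrightarrow> epowr top a = top"
  by (simp add: epowr_def)

lemma epowr_0: "a > 0 \<Longrightarrow> epowr 0 a = 0"
  by (simp add: epowr_def)

lemma epowr_1: "epowr x 1 = x"
  by (cases x rule: ennreal_cases) (simp_all add: epowr_def)

lemma epowr_eq_top_iff: "a > 0 \<Longrightarrow> epowr x a = top \<longleftrightarrow> x = top"
  by (cases x rule: ennreal_cases) (simp_all add: epowr_def)

lemma epowr_eq_0_iff: "a > 0 \<Longrightarrow> epowr x a = 0 \<longleftrightarrow> x = 0"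
  by (cases x rule: ennreal_cases) (simp_all add: epowr_def)

lemma epowr_mono:
  assumes "a > 0" "x \<le> y"
  shows "epowr x a \<le> epowr y a"
proof (cases y rule: ennreal_cases)
  case (real b)
  then obtain c where "x = ennreal c" "0 \<le> c" "c \<le> b"
    using assms by (cases x rule: ennreal_cases) (auto simp: top_unique)
  then show ?thesis using real assms by (simp add: epowr_def powr_mono2)
qed (use assms in \<open>simp add: epowr_top\<close>)

lemma epowr_epowr: "a > 0 \<Longrightarrow> b > 0 \<Longrightarrow> epowr (epowr x a) b = epowr x (a * b)"
  by (cases x rule: ennreal_cases) (simp_all add: epowr_def powr_powr)

lemma epowr_epowr_inverse: "a > 0 \<Longrightarrow> epowr (epowr x a) (1 / a) = x"
  by (simp add: epowr_epowr epowr_1)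

lemma epowr_inverse_epowr: "a > 0 \<Longrightarrow> epowr (epowr x (1 / a)) a = x"
  by (simp add: epowr_epowr epowr_1)

lemma epowr_le_epowr_iff: "a > 0 \<Longrightarrow> epowr x a \<le> epowr y a \<longleftrightarrow> x \<le> y"
  by (metis epowr_mono epowr_epowr_inverse divide_pos_pos zero_less_one)

lemma epowr_mult:
  assumes "a > 0"
  shows "epowr (x * y) a = epowr x a * epowr y a"
proof (cases x rule: ennreal_cases)
  case (real c)
  show ?thesis
  proof (cases y rule: ennreal_cases)
    case (real d)
    with \<open>x = ennreal c\<close> \<open>0 \<le> c\<close> show ?thesis
      by (simp add: epowr_ennreal powr_mult ennreal_mult[symmetric])
  next
    case top
    with \<open>x = ennreal c\<close> \<open>0 \<le> c\<close> assms show ?thesis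
      by (cases "c = 0") (simp_all add: epowr_def ennreal_mult_top)
  qed
next
  case top
  with assms show ?thesis
    by (cases "y = 0") (simp_all add: epowr_def ennreal_top_mult epowr_eq_0_iff enn2real_eq_0_iff)
qed

lemma epowr_add_epowr_le:
  assumes "a > 0"
  shows "epowr (epowr x a + epowr y a) (1 / a) \<le> ennreal (2 powr (1 / a)) * (x + y)"
proof -
  have "epowr x a + epowr y a \<le> ennreal 2 * epowr (max x y) a"
    using add_mono[OF epowr_mono[OF assms max.cobounded1] epowr_mono[OF assms max.cobounded2]]
    by (simp add: mult_2)
  then have "epowr (epowr x a + epowr y a) (1 / a) \<le> epowr (ennreal 2 * epowr (max x y) a) (1 / a)"
    using assms by (intro epowr_mono) simp_all
  also have "\<dots> = ennreal (2 powr (1 / a)) * max x y"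
    using assms
    by (simp only: epowr_mult epowr_epowr_inverse epowr_ennreal[of 2] zero_le_numeral divide_pos_pos zero_less_one)
  also have "\<dots> \<le> ennreal (2 powr (1 / a)) * (x + y)"
    by (intro mult_left_mono) (simp_all add: add_increasing add_increasing2)
  finally show ?thesis .
qed

lemma measurable_epowr [measurable (raw)]:
  assumes [measurable]: "f \<in> borel_measurable M"
  shows "(\<lambda>x. epowr (f x) a) \<in> borel_measurable M"
proof -
  have "(\<lambda>x. epowr (f x) a) = (\<lambda>x. if f x = top then (if a > 0 then top else if a = 0 then 1 else 0)
          else ennreal (enn2real (f x) powr a))"
    by (simp add: epowr_def fun_eq_iff)
  also have "\<dots> \<in> borel_measurable M" by measurable
  finally show ?thesis .
qed

lemma ennreal_le_suminf: "(f n :: ennreal) \<le> suminf f"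
  using sum_le_suminf[of f "{n}"] by simp

lemma suminf_geometric_ennreal: "0 \<le> \<rho> \<Longrightarrow> \<rho> < 1 \<Longrightarrow> (\<Sum>n. ennreal (\<rho> ^ n)) = ennreal (1 / (1 - \<rho>))"
  by (rule suminf_ennreal_eq) (auto intro: geometric_sums)

lemma comparable_ennreal:
  fixes x y :: ennreal
  assumes "C > 0" "x \<le> ennreal C * y" "y \<le> ennreal C * x"
  shows "x < top \<longleftrightarrow> y < top" and "ennreal (1 / C) * x \<le> y"
proof -
  show "x < top \<longleftrightarrow> y < top"
    using assms(2,3) by (metis ennreal_less_top ennreal_mult_less_top le_less_trans)
  have "ennreal (1 / C) * x \<le> ennreal (1 / C) * ennreal C * y"
    using assms(2) by (simp add: mult.assoc mult_left_mono)
  also have "ennreal (1 / C) * ennreal C = 1"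
    using assms(1) by (simp add: ennreal_mult[symmetric])
  finally show "ennreal (1 / C) * x \<le> y" by simp
qed

section \<open>Power inequalities for series\<close>

lemma le_powr_mult_powr_bound:
  fixes x S s :: real
  assumes "0 < s" "s \<le> 1" "0 \<le> x" "x powr s \<le> S"
  shows "x \<le> x powr s * S powr (1 / s - 1)"
proof (cases "x = 0")
  case False
  then have x: "x > 0" using assms by simp
  have "x = x powr s * (x powr s) powr (1 / s - 1)"
    using x assms by (simp add: powr_powr powr_add[symmetric] algebra_simps)
  also have "\<dots> \<le> x powr s * S powr (1 / s - 1)"
    using assms by (intro mult_left_mono powr_mono2) auto
  finally show ?thesis .
qed simp

lemma epowr_suminf_le_suminf_epowr:
  assumes s: "0 < s" "s \<le> 1"
  shows "epowr (\<Sum>n. u n) s \<le> (\<Sum>n. epowr (u n) s)"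
proof (cases "(\<Sum>n. epowr (u n) s) = top")
  case False
  define S where "S = enn2real (\<Sum>n. epowr (u n) s)"
  have S_eq: "(\<Sum>n. epowr (u n) s) = ennreal S" and S0: "0 \<le> S"
    using False by (simp_all add: S_def less_top)
  have "u n \<le> epowr (u n) s * ennreal (S powr (1 / s - 1))" for n
  proof -
    have "epowr (u n) s \<noteq> top"
      using False ennreal_suminf_lessD[of "\<lambda>n. epowr (u n) s" top n] by (auto simp: less_top)
    then obtain x where x: "u n = ennreal x" "0 \<le> x"
      using s epowr_eq_top_iff[of s "u n"] by (cases "u n" rule: ennreal_cases) auto
    have "ennreal (x powr s) \<le> ennreal S"
      using ennreal_le_suminf[of "\<lambda>n. epowr (u n) s" n] x S_eq by (simp add: epowr_ennreal)
    then have "x \<le> x powr s * S powr (1 / s - 1)"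
      using le_powr_mult_powr_bound s x(2) S0 by simp
    then show ?thesis
      using x by (simp add: epowr_ennreal ennreal_mult[symmetric])
  qed
  then have "(\<Sum>n. u n) \<le> (\<Sum>n. epowr (u n) s * ennreal (S powr (1 / s - 1)))"
    by (intro suminf_le) auto
  also have "\<dots> = ennreal (S * S powr (1 / s - 1))"
    using S_eq S0 by (simp add: ennreal_mult)
  also have "S * S powr (1 / s - 1) = S powr (1 / s)"
    using S0 by (cases "S = 0") (simp_all add: powr_add[symmetric] powr_mult_base)
  finally have "epowr (\<Sum>n. u n) s \<le> epowr (ennreal (S powr (1 / s))) s"
    using s by (intro epowr_mono) auto
  also have "\<dots> = ennreal S"
    using s S0 by (simp add: epowr_ennreal powr_powr)
  finally show ?thesis
    using S_eq by simp
qed simp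

lemma Youngs_inequality_rescaled:
  fixes Q l x T :: real
  assumes Q: "1 \<le> Q" and l: "0 < l" and x: "0 \<le> x" and T: "0 < T"
  shows "x \<le> T powr (1 / Q) * (l powr (1 - Q) * x powr Q / (T * Q) + l * (1 - 1 / Q))"
proof (cases "Q = 1")
  case False
  then have Q1: "Q > 1" using Q by simp
  define Q' where "Q' = Q / (Q - 1)"
  have Q'1: "Q' > 1" and inv: "1 / Q + 1 / Q' = 1"
    using Q1 by (simp_all add: Q'_def field_simps)
  define a where "a = l powr ((1 - Q) / Q) * x / T powr (1 / Q)"
  define b where "b = l powr ((Q - 1) / Q)"
  have "a * b \<le> a powr Q / Q + b powr Q' / Q'"
    by (rule Youngs_inequality[OF Q1 Q'1 inv]) (use x in \<open>simp_all add: a_def b_def\<close>)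
  moreover have "a * b = x / T powr (1 / Q)"
  proof -
    have "(1 - Q) / Q + (Q - 1) / Q = 0" using Q1 by (simp add: field_simps)
    then have "l powr ((1 - Q) / Q) * l powr ((Q - 1) / Q) = 1"
      using l by (simp add: powr_add[symmetric])
    then show ?thesis by (simp add: a_def b_def field_simps)
  qed
  moreover have "a powr Q = l powr (1 - Q) * x powr Q / T"
  proof -
    have "a powr Q = (l powr ((1 - Q) / Q)) powr Q * x powr Q / (T powr (1 / Q)) powr Q"
      using l x T by (simp add: a_def powr_divide powr_mult)
    also have "\<dots> = l powr (1 - Q) * x powr Q / T"
      using Q1 l T by (simp add: powr_powr)
    finally show ?thesis .
  qed
  moreover have "b powr Q' = l"
    using Q1 l by (simp add: b_def powr_powr Q'_def)
  moreover have "l / Q' = l * (1 - 1 / Q)"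
    using Q1 by (simp add: Q'_def field_simps)
  ultimately have "x / T powr (1 / Q) \<le> l powr (1 - Q) * x powr Q / (T * Q) + l * (1 - 1 / Q)"
    by simp
  moreover have "T powr (1 / Q) > 0" using T by simp
  ultimately show ?thesis by (simp add: field_simps)
next
  case True
  then show ?thesis using T x l by simp
qed

lemma suminf_le_powr_by_Youngs_inequality:
  assumes Q: "1 \<le> Q" and l: "\<And>n. 0 < l n" "(\<Sum>n. ennreal (l n)) \<le> 1"
    and x: "\<And>n. 0 \<le> x n" and T: "0 < T"
    and T_eq: "(\<Sum>n. ennreal (l n powr (1 - Q) * x n powr Q)) = ennreal T"
  shows "(\<Sum>n. ennreal (x n)) \<le> ennreal (T powr (1 / Q))"
proof -
  have Q0: "0 < Q" and Q1: "0 \<le> 1 - 1 / Q"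
    using Q by (simp_all add: field_simps)
  have "ennreal (x n) \<le> ennreal (T powr (1 / Q)) * (ennreal (l n powr (1 - Q) * x n powr Q) / ennreal (T * Q)
                  + ennreal (l n) * ennreal (1 - 1 / Q))" for n
  proof -
    have "ennreal (T powr (1 / Q) * (l n powr (1 - Q) * x n powr Q / (T * Q) + l n * (1 - 1 / Q)))
        = ennreal (T powr (1 / Q)) * (ennreal (l n powr (1 - Q) * x n powr Q) / ennreal (T * Q)
                  + ennreal (l n) * ennreal (1 - 1 / Q))"
      using T Q0 Q1 l(1)[of n] x[of n]
      by (simp add: ennreal_mult divide_ennreal[symmetric] ennreal_plus[symmetric] less_imp_le)
    then show ?thesis
      using Youngs_inequality_rescaled[OF Q l(1) x T, of n] by (metis ennreal_leI)
  qed
  then have "(\<Sum>n. ennreal (x n)) \<le> (\<Sum>n. ennreal (T powr (1 / Q)) * (ennreal (l n powr (1 - Q) * x n powr Q) / ennreal (T * Q)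
                  + ennreal (l n) * ennreal (1 - 1 / Q)))"
    by (intro suminf_le) auto
  also have "\<dots> = ennreal (T powr (1 / Q)) * ((\<Sum>n. ennreal (l n powr (1 - Q) * x n powr Q)) / ennreal (T * Q)
                  + (\<Sum>n. ennreal (l n)) * ennreal (1 - 1 / Q))"
    by (simp add: suminf_add[symmetric])
  also have "(\<Sum>n. ennreal (l n powr (1 - Q) * x n powr Q)) / ennreal (T * Q) = ennreal (1 / Q)"
    using T_eq T Q0 by (simp add: divide_ennreal)
  also have "ennreal (1 / Q) + (\<Sum>n. ennreal (l n)) * ennreal (1 - 1 / Q) \<le> ennreal (1 / Q) + 1 * ennreal (1 - 1 / Q)"
    by (intro add_left_mono mult_right_mono l(2)) simp
  also have "ennreal (1 / Q) + 1 * ennreal (1 - 1 / Q) = 1"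
    using Q by (simp add: ennreal_plus[symmetric] field_simps)
  finally show ?thesis
    by (simp add: mult_left_mono)
qed

text \<open>Hoelder's inequality for \<open>c\<^sub>n = l\<^sub>n\<^sup>1\<^sup>-\<^sup>1\<^sup>/\<^sup>Q \<cdot> (l\<^sub>n\<^sup>1\<^sup>/\<^sup>Q\<^sup>-\<^sup>1 c\<^sub>n)\<close>, proved termwise by Young's
  inequality after normalising by the right-hand side.\<close>
lemma epowr_suminf_le_weighted:
  assumes Q: "1 \<le> Q" and l: "\<And>n. 0 < l n" "(\<Sum>n. ennreal (l n)) \<le> 1"
  shows "epowr (\<Sum>n. c n) Q \<le> (\<Sum>n. ennreal (l n powr (1 - Q)) * epowr (c n) Q)"
proof (cases "(\<Sum>n. ennreal (l n powr (1 - Q)) * epowr (c n) Q) = top")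
  case False
  define T where "T = enn2real (\<Sum>n. ennreal (l n powr (1 - Q)) * epowr (c n) Q)"
  have T_eq: "(\<Sum>n. ennreal (l n powr (1 - Q)) * epowr (c n) Q) = ennreal T" and T0: "0 \<le> T"
    using False by (simp_all add: T_def less_top)
  have Q0: "0 < Q" using Q by simp
  have c_finite: "c n \<noteq> top" for n
  proof
    assume "c n = top"
    then have "ennreal (l n powr (1 - Q)) * epowr (c n) Q = top"
      using l(1)[of n] Q0 by (simp add: epowr_top ennreal_mult_top)
    then show False
      using False ennreal_suminf_lessD[of "\<lambda>n. ennreal (l n powr (1 - Q)) * epowr (c n) Q" top n]
      by (simp add: less_top)
  qed
  define x where "x n = enn2real (c n)" for n
  have x: "c n = ennreal (x n)" "0 \<le> x n" for n
    using c_finite[of n] by (simp_all add: x_def ennreal_enn2real_if)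
  have term_eq: "ennreal (l n powr (1 - Q)) * epowr (c n) Q = ennreal (l n powr (1 - Q) * x n powr Q)" for n
    using x[of n] by (simp add: epowr_ennreal ennreal_mult)
  show ?thesis
  proof (cases "T = 0")
    case True
    have "l n powr (1 - Q) * x n powr Q \<le> 0" for n
      using ennreal_le_suminf[of "\<lambda>n. ennreal (l n powr (1 - Q)) * epowr (c n) Q" n] T_eq True term_eq
      by (simp add: ennreal_eq_0_iff)
    then have "x n = 0" for n
      using l(1)[of n] x(2)[of n] by (smt (verit) mult_pos_pos powr_gt_zero powr_eq_0_iff)
    then show ?thesis
      using x Q0 by (simp add: epowr_0)
  next
    case False
    have "(\<Sum>n. c n) \<le> ennreal (T powr (1 / Q))"
      using suminf_le_powr_by_Youngs_inequality[OF Q l x(2)] False T0 T_eq term_eq by (simp add: x(1))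
    then have "epowr (\<Sum>n. c n) Q \<le> epowr (ennreal (T powr (1 / Q))) Q"
      using Q0 by (intro epowr_mono) auto
    also have "\<dots> = ennreal T"
      using Q0 T0 by (simp add: epowr_ennreal powr_powr)
    finally show ?thesis
      using T_eq by simp
  qed
qed simp

section \<open>Lebesgue norms of series\<close>

lemma AE_le_Inf_AE_bounds:
  fixes h :: "'a \<Rightarrow> ennreal"
  shows "AE x in M. h x \<le> Inf {C. AE x in M. h x \<le> C}"
proof (cases "Inf {C. AE x in M. h x \<le> C} = top")
  case True
  then show ?thesis by (subst True) simp
next
  case False
  define c where "c = Inf {C. AE x in M. h x \<le> C}"
  have "\<exists>C. (AE x in M. h x \<le> C) \<and> C < c + ennreal (1 / Suc m)" for m
  proof -
    have "c < c + ennreal (1 / Suc m)"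
      using False by (simp add: c_def ennreal_add_left_cancel_less less_top[symmetric])
    then show ?thesis
      unfolding c_def by (subst (asm) Inf_less_iff) auto
  qed
  then obtain C where C: "\<And>m. AE x in M. h x \<le> C m" "\<And>m. C m < c + ennreal (1 / Suc m)"
    by metis
  have "AE x in M. \<forall>m. h x \<le> C m"
    using C(1) by (simp add: AE_all_countable)
  then have "AE x in M. h x \<le> c"
  proof eventually_elim
    case (elim x)
    show ?case
    proof (rule ennreal_le_epsilon)
      fix e :: real
      assume "0 < e"
      then obtain m where m: "1 / real (Suc m) < e"
        by (metis nat_approx_posE)
      have "h x \<le> c + ennreal (1 / Suc m)"
        using elim C(2)[of m] by (meson order.trans less_imp_le)
      also have "\<dots> \<le> c + ennreal e"
        using m by (intro add_left_mono ennreal_leI) simp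
      finally show "h x \<le> c + ennreal e" .
    qed
  qed
  then show ?thesis by (simp add: c_def)
qed

lemma enn2real_pos: "p > 0 \<Longrightarrow> p \<noteq> top \<Longrightarrow> 0 < enn2real p"
  by (simp add: enn2real_positive_iff less_top)

lemma one_le_enn2real: "q \<ge> 1 \<Longrightarrow> q \<noteq> top \<Longrightarrow> 1 \<le> enn2real q"
  using enn2real_mono[of 1 q] by (simp add: less_top)

lemma Lq_norm_mono:
  assumes "q \<ge> 1" "\<And>x. g x \<le> h x"
  shows "Lq_norm q g \<le> Lq_norm q h"
proof (cases "q = top")
  case True
  have "{C. AE x in lebesgue. h x \<le> C} \<subseteq> {C. AE x in lebesgue. g x \<le> C}"
    using assms(2) by (auto elim: AE_mp intro: order_trans)
  then show ?thesis
    using True unfolding Lq_norm_def by (simp add: Inf_superset_mono)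
next
  case False
  have "enn2real q > 0"
    using one_le_enn2real[OF assms(1) False] by simp
  with False show ?thesis
    unfolding Lq_norm_def
    by (simp add: epowr_le_epowr_iff nn_integral_mono epowr_mono assms(2))
qed

lemma epowr_Lq_norm:
  assumes "q \<ge> 1" "q \<noteq> top"
  shows "epowr (Lq_norm q g) (enn2real q) = (\<integral>\<^sup>+ x. epowr (g x) (enn2real q) \<partial>lebesgue)"
  using assms one_le_enn2real[OF assms] by (simp add: Lq_norm_def epowr_inverse_epowr)

lemma Lq_norm_top_suminf_le:
  assumes "\<And>x. G x \<le> (\<Sum>n. g n x)"
  shows "Lq_norm top G \<le> (\<Sum>n. Lq_norm top (g n))"
proof -
  have "AE x in lebesgue. \<forall>n. g n x \<le> Lq_norm top (g n)"
    by (simp add: AE_all_countable Lq_norm_def AE_le_Inf_AE_bounds)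
  then have "AE x in lebesgue. G x \<le> (\<Sum>n. Lq_norm top (g n))"
  proof eventually_elim
    case (elim x)
    then show ?case
      using assms[of x] by (meson order_trans suminf_le summableI)
  qed
  then show ?thesis
    unfolding Lq_norm_def by (simp add: Inf_lower)
qed

lemma nn_integral_epowr_suminf_le_weighted:
  assumes Q: "1 \<le> Q" and l: "\<And>n. 0 < l n" "(\<Sum>n. ennreal (l n)) \<le> 1"
    and meas: "\<And>n. g n \<in> borel_measurable M"
  shows "(\<integral>\<^sup>+ x. epowr (\<Sum>n. g n x) Q \<partial>M)
           \<le> (\<Sum>n. ennreal (l n powr (1 - Q)) * (\<integral>\<^sup>+ x. epowr (g n x) Q \<partial>M))"
proof -
  have "(\<integral>\<^sup>+ x. epowr (\<Sum>n. g n x) Q \<partial>M)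
          \<le> (\<integral>\<^sup>+ x. (\<Sum>n. ennreal (l n powr (1 - Q)) * epowr (g n x) Q) \<partial>M)"
    by (intro nn_integral_mono epowr_suminf_le_weighted[OF Q l])
  also have "\<dots> = (\<Sum>n. ennreal (l n powr (1 - Q)) * (\<integral>\<^sup>+ x. epowr (g n x) Q \<partial>M))"
    using meas by (simp add: nn_integral_suminf nn_integral_cmult)
  finally show ?thesis .
qed

lemma suminf_geometric_weights_ennreal:
  assumes "0 < \<rho>" "\<rho> < 1"
  shows "(\<Sum>n. ennreal ((1 - \<rho>) * \<rho> ^ n)) = 1"
proof -
  have "(\<Sum>n. ennreal ((1 - \<rho>) * \<rho> ^ n)) = (\<Sum>n. ennreal (1 - \<rho>) * ennreal (\<rho> ^ n))"
    using assms by (simp add: ennreal_mult)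
  also have "\<dots> = ennreal (1 - \<rho>) * ennreal (1 / (1 - \<rho>))"
    using assms by (simp only: ennreal_suminf_cmult suminf_geometric_ennreal less_imp_le)
  finally show ?thesis
    using assms by (simp add: ennreal_mult[symmetric])
qed

text \<open>The weights of Hoelder's inequality are chosen as \<open>(1 - \<rho>) \<rho>\<^sup>n\<close>, which turns the
  geometric decay of the norms into a uniform bound on every term.\<close>
lemma Lq_norm_finite_suminf_geometric_le:
  fixes g :: "nat \<Rightarrow> 'a::euclidean_space \<Rightarrow> ennreal"
  assumes q: "q \<ge> 1" and q_finite: "q \<noteq> top" and \<rho>: "0 < \<rho>" "\<rho> < 1"
    and meas: "\<And>n. g n \<in> borel_measurable lebesgue"
    and G_le: "\<And>x. G x \<le> (\<Sum>n. g n x)"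
    and g_le: "\<And>n. Lq_norm q (g n) \<le> D * ennreal (\<rho> ^ n)"
  shows "Lq_norm q G \<le> D * ennreal (1 / (1 - \<rho>))"
proof -
  define Q where "Q = enn2real q"
  have Q: "1 \<le> Q" using one_le_enn2real[OF q q_finite] by (simp add: Q_def)
  define l where "l n = (1 - \<rho>) * \<rho> ^ n" for n
  define E where "E = epowr (D * ennreal (1 / (1 - \<rho>))) Q"
  have l_pos: "0 < l n" for n using \<rho> by (simp add: l_def)
  have l_sum: "(\<Sum>n. ennreal (l n)) = 1"
    unfolding l_def by (rule suminf_geometric_weights_ennreal[OF \<rho>])
  have term_le: "ennreal (l n powr (1 - Q)) * (\<integral>\<^sup>+ x. epowr (g n x) Q \<partial>lebesgue) \<le> E * ennreal (l n)" for n
  proof -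
    have "l n powr (1 - Q) * (\<rho> ^ n) powr Q = (1 - \<rho>) powr (1 - Q) * ((\<rho> ^ n) powr (1 - Q) * (\<rho> ^ n) powr Q)"
      using \<rho> by (simp add: l_def powr_mult)
    also have "\<dots> = (1 / (1 - \<rho>)) powr Q * l n"
      using \<rho> by (simp add: l_def powr_add[symmetric] powr_diff powr_divide)
    finally have weight_eq: "l n powr (1 - Q) * (\<rho> ^ n) powr Q = (1 / (1 - \<rho>)) powr Q * l n" .
    have "(\<integral>\<^sup>+ x. epowr (g n x) Q \<partial>lebesgue) \<le> epowr (D * ennreal (\<rho> ^ n)) Q"
      using epowr_mono[OF _ g_le, of Q n] Q q q_finite by (simp add: Q_def epowr_Lq_norm)
    then have "ennreal (l n powr (1 - Q)) * (\<integral>\<^sup>+ x. epowr (g n x) Q \<partial>lebesgue)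
        \<le> ennreal (l n powr (1 - Q)) * epowr (D * ennreal (\<rho> ^ n)) Q"
      by (rule mult_left_mono) simp
    also have "\<dots> = epowr D Q * ennreal (l n powr (1 - Q) * (\<rho> ^ n) powr Q)"
      using \<rho> Q by (simp add: epowr_mult epowr_ennreal ennreal_mult mult_ac)
    also have "\<dots> = epowr D Q * ennreal ((1 / (1 - \<rho>)) powr Q * l n)"
      by (simp only: weight_eq)
    also have "\<dots> = E * ennreal (l n)"
      using \<rho> Q l_pos[of n] by (simp add: E_def epowr_mult epowr_ennreal ennreal_mult mult_ac)
    finally show ?thesis .
  qed
  have "epowr (Lq_norm q G) Q \<le> (\<integral>\<^sup>+ x. epowr (\<Sum>n. g n x) Q \<partial>lebesgue)"
    using q q_finite Q by (simp add: Q_def epowr_Lq_norm nn_integral_mono epowr_mono G_le)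
  also have "\<dots> \<le> (\<Sum>n. ennreal (l n powr (1 - Q)) * (\<integral>\<^sup>+ x. epowr (g n x) Q \<partial>lebesgue))"
    using Q l_pos l_sum meas by (intro nn_integral_epowr_suminf_le_weighted) auto
  also have "\<dots> \<le> (\<Sum>n. E * ennreal (l n))"
    by (intro suminf_le term_le) auto
  also have "\<dots> = E"
    by (simp add: ennreal_suminf_cmult l_sum)
  finally show ?thesis
    using Q by (simp add: E_def epowr_le_epowr_iff)
qed

lemma Lq_norm_suminf_geometric_le:
  fixes g :: "nat \<Rightarrow> 'a::euclidean_space \<Rightarrow> ennreal"
  assumes q: "q \<ge> 1" and \<rho>: "0 < \<rho>" "\<rho> < 1"
    and meas: "\<And>n. g n \<in> borel_measurable lebesgue"
    and G_le: "\<And>x. G x \<le> (\<Sum>n. g n x)"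
    and g_le: "\<And>n. Lq_norm q (g n) \<le> D * ennreal (\<rho> ^ n)"
  shows "Lq_norm q G \<le> D * ennreal (1 / (1 - \<rho>))"
proof (cases "q = top")
  case True
  have "Lq_norm q G \<le> (\<Sum>n. Lq_norm q (g n))"
    unfolding True by (rule Lq_norm_top_suminf_le[OF G_le])
  also have "\<dots> \<le> (\<Sum>n. D * ennreal (\<rho> ^ n))"
    by (intro suminf_le g_le) auto
  also have "\<dots> = D * ennreal (1 / (1 - \<rho>))"
    using \<rho> by (simp only: ennreal_suminf_cmult suminf_geometric_ennreal less_imp_le)
  finally show ?thesis .
qed (rule Lq_norm_finite_suminf_geometric_le[OF q _ \<rho> meas G_le g_le])

section \<open>Local averages and slice norms\<close>

lemma local_avg_measurable:
  fixes f :: "'a::euclidean_space \<Rightarrow> real"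
  assumes f: "f \<in> borel_measurable lebesgue" and t: "t > 0"
  shows "local_avg r t f \<in> borel_measurable lebesgue"
proof -
  obtain f' where f'[measurable]: "f' \<in> borel_measurable lborel" and ae: "AE y in lborel. f y = f' y"
    using completion_ex_borel_measurable_real[OF f] by blast
  define V where "V = emeasure lebesgue (ball (0::'a) t)"
  define I where "I x = (\<integral>\<^sup>+ y. ennreal (\<bar>f' y\<bar> powr r) * indicator (ball x t) y \<partial>lborel)" for x
  have avg_eq: "local_avg r t f = (\<lambda>x. epowr (I x / V) (1 / r))"
  proof
    fix x
    have "(\<integral>\<^sup>+ y\<in>ball x t. ennreal (\<bar>f y\<bar> powr r) \<partial>lebesgue) = I x"
      unfolding I_def nn_integral_completion by (rule nn_integral_cong_AE) (use ae in auto)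
    moreover have "emeasure lebesgue (ball x t) = V"
      using t emeasure_lebesgue_ball_conv_unit_ball[of t x] emeasure_lebesgue_ball_conv_unit_ball[of t "0::'a"]
      by (simp add: V_def)
    ultimately show "local_avg r t f x = epowr (I x / V) (1 / r)"
      by (simp add: local_avg_def)
  qed
  have joint: "(\<lambda>(x, y). ennreal (\<bar>f' y\<bar> powr r) * indicator (ball x t) y)
                \<in> borel_measurable (lborel \<Otimes>\<^sub>M (lborel :: 'a measure))"
  proof -
    have "(\<lambda>z::'a \<times> 'a. ennreal (\<bar>f' (snd z)\<bar> powr r) * indicator {z. dist (fst z) (snd z) < t} z)
          \<in> borel_measurable (lborel \<Otimes>\<^sub>M lborel)"
      by measurable
    moreover have "(\<lambda>(x, y). ennreal (\<bar>f' y\<bar> powr r) * indicator (ball x t) y)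
       = (\<lambda>z::'a \<times> 'a. ennreal (\<bar>f' (snd z)\<bar> powr r) * indicator {z. dist (fst z) (snd z) < t} z)"
      by (auto simp: fun_eq_iff indicator_def mem_ball)
    ultimately show ?thesis by simp
  qed
  have [measurable]: "I \<in> borel_measurable lborel"
    unfolding I_def using lborel.borel_measurable_nn_integral[OF joint] by simp
  have "(\<lambda>x. epowr (I x / V) (1 / r)) \<in> borel_measurable lebesgue"
    by (rule measurable_completion) measurable
  then show ?thesis
    by (simp only: avg_eq)
qed

lemma local_avg_mono:
  assumes r: "r > 0" and le: "\<And>y. \<bar>g y\<bar> \<le> \<bar>f y\<bar>"
  shows "local_avg r t g x \<le> local_avg r t f x"
proof -
  have "(\<integral>\<^sup>+ y\<in>ball x t. ennreal (\<bar>g y\<bar> powr r) \<partial>lebesgue) \<le> (\<integral>\<^sup>+ y\<in>ball x t. ennreal (\<bar>f y\<bar> powr r) \<partial>lebesgue)"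
    by (intro nn_integral_mono mult_right_mono ennreal_leI powr_mono2) (use r le in auto)
  then show ?thesis
    unfolding local_avg_def using r by (intro epowr_mono divide_right_mono_ennreal) auto
qed

lemma slice_norm_mono:
  assumes "q \<ge> 1" "r > 0" "\<And>y. \<bar>g y\<bar> \<le> \<bar>f y\<bar>"
  shows "slice_norm q r t g \<le> slice_norm q r t f"
  unfolding slice_norm_def using assms by (intro Lq_norm_mono local_avg_mono)

definition slice_norm_on :: "'a::euclidean_space set \<Rightarrow> ennreal \<Rightarrow> real \<Rightarrow> real \<Rightarrow> ('a \<Rightarrow> real) \<Rightarrow> ennreal" where
  "slice_norm_on A q r t f = slice_norm q r t (\<lambda>x. indicator A x * f x)"

lemma slice_norm_on_mono:
  assumes "q \<ge> 1" "r > 0" "A \<subseteq> B"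
  shows "slice_norm_on A q r t f \<le> slice_norm_on B q r t f"
  unfolding slice_norm_on_def by (rule slice_norm_mono) (use assms in \<open>auto simp: indicator_def\<close>)

lemma slice_norm_on_le_slice_norm:
  assumes "q \<ge> 1" "r > 0"
  shows "slice_norm_on A q r t f \<le> slice_norm q r t f"
  unfolding slice_norm_on_def by (rule slice_norm_mono) (use assms in \<open>auto simp: indicator_def\<close>)

text \<open>Since \<open>1 / r \<le> 1\<close>, the \<open>r\<close>-th root is subadditive.\<close>
lemma local_avg_le_suminf_pieces:
  fixes f :: "'a::euclidean_space \<Rightarrow> real" and A :: "nat \<Rightarrow> 'a set"
  assumes f[measurable]: "f \<in> borel_measurable lebesgue" and A[measurable]: "\<And>n. A n \<in> sets lebesgue"
    and disj: "disjoint_family A" and cover: "(\<Union>n. A n) = UNIV" and r: "r \<ge> 1"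
  shows "local_avg r t f x \<le> (\<Sum>n. local_avg r t (\<lambda>y. indicator (A n) y * f y) x)"
proof -
  have [measurable]: "ball x t \<in> sets lebesgue"
    by (intro sets_completionI_sets) simp
  have split: "ennreal (\<bar>f y\<bar> powr r) = (\<Sum>n. ennreal (\<bar>indicator (A n) y * f y\<bar> powr r))" for y
  proof -
    obtain m where m: "y \<in> A m" using cover by blast
    have "y \<notin> A n" if "n \<noteq> m" for n
      using disj m that unfolding disjoint_family_on_def by blast
    then have "(\<lambda>n. ennreal (\<bar>indicator (A n) y * f y\<bar> powr r)) = (\<lambda>n. if n = m then ennreal (\<bar>f y\<bar> powr r) else 0)"
      using m by (auto simp: fun_eq_iff)
    then show ?thesis
      using sums_unique[OF sums_single[of m "\<lambda>_. ennreal (\<bar>f y\<bar> powr r)"]] by simp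
  qed
  have "(\<integral>\<^sup>+ y\<in>ball x t. ennreal (\<bar>f y\<bar> powr r) \<partial>lebesgue)
     = (\<Sum>n. (\<integral>\<^sup>+ y\<in>ball x t. ennreal (\<bar>indicator (A n) y * f y\<bar> powr r) \<partial>lebesgue))"
  proof -
    have "(\<integral>\<^sup>+ y\<in>ball x t. ennreal (\<bar>f y\<bar> powr r) \<partial>lebesgue)
        = (\<integral>\<^sup>+ y. (\<Sum>n. ennreal (\<bar>indicator (A n) y * f y\<bar> powr r) * indicator (ball x t) y) \<partial>lebesgue)"
      by (simp add: split[symmetric])
    also have "\<dots> = (\<Sum>n. (\<integral>\<^sup>+ y\<in>ball x t. ennreal (\<bar>indicator (A n) y * f y\<bar> powr r) \<partial>lebesgue))"
      by (rule nn_integral_suminf) measurable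
    finally show ?thesis .
  qed
  then have "local_avg r t f x = epowr (\<Sum>n. (\<integral>\<^sup>+ y\<in>ball x t. ennreal (\<bar>indicator (A n) y * f y\<bar> powr r) \<partial>lebesgue)
                                          / emeasure lebesgue (ball x t)) (1 / r)"
    unfolding local_avg_def by simp
  also have "\<dots> \<le> (\<Sum>n. local_avg r t (\<lambda>y. indicator (A n) y * f y) x)"
    unfolding local_avg_def using r by (intro epowr_suminf_le_suminf_epowr) auto
  finally show ?thesis .
qed

lemma sets_lebesgue_annulus [measurable]: "(annulus k :: 'a::euclidean_space set) \<in> sets lebesgue"
proof -
  have "(annulus k :: 'a set) = cball 0 (2 powr (real_of_int k)) - cball 0 (2 powr (real_of_int k - 1))"
    by (auto simp: annulus_def)
  moreover have "cball (0::'a) (2 powr (real_of_int k)) - cball 0 (2 powr (real_of_int k - 1)) \<in> sets lebesgue"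
    by (intro sets_completionI_sets sets.Diff) (simp_all add: borel_closed)
  ultimately show ?thesis by simp
qed

lemma annulus_subset_cball:
  assumes "k \<le> 0"
  shows "annulus k \<subseteq> cball (0::'a::euclidean_space) 1"
proof
  fix x :: 'a
  assume "x \<in> annulus k"
  then have "norm x \<le> 2 powr real_of_int k" by (simp add: annulus_def)
  also have "\<dots> \<le> 2 powr 0" using assms by (intro powr_mono) auto
  finally show "x \<in> cball 0 1" by simp
qed

definition dyadic_piece :: "nat \<Rightarrow> 'a::euclidean_space set" where
  "dyadic_piece n = (if n = 0 then cball 0 1 else annulus (int n))"

lemma sets_lebesgue_dyadic_piece [measurable]: "dyadic_piece n \<in> sets lebesgue"
  by (simp add: dyadic_piece_def sets_completionI_sets)

lemma dyadic_piece_bounds: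
  assumes "x \<in> dyadic_piece n"
  shows "norm x \<le> 2 powr real n" and "n \<noteq> 0 \<Longrightarrow> 2 powr (real n - 1) < norm x"
  using assms by (auto simp: dyadic_piece_def annulus_def split: if_splits)

lemma disjoint_family_dyadic_piece: "disjoint_family (dyadic_piece :: nat \<Rightarrow> 'a::euclidean_space set)"
proof -
  have disj: "dyadic_piece n \<inter> dyadic_piece m = ({} :: 'a set)" if "n < m" for n m
  proof -
    have "m \<noteq> 0" and "2 powr real n \<le> 2 powr (real m - 1)"
      using that by (auto intro: powr_mono)
    then have False if "x \<in> dyadic_piece n" "x \<in> dyadic_piece m" for x :: 'a
      using dyadic_piece_bounds(1)[OF that(1)] dyadic_piece_bounds(2)[OF that(2)] by linarith
    then show ?thesis by blast
  qed
  show ?thesis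
    unfolding disjoint_family_on_def
  proof (intro ballI impI)
    fix n m :: nat
    assume "n \<noteq> m"
    then show "dyadic_piece n \<inter> dyadic_piece m = ({} :: 'a set)"
      using disj[of n m] disj[of m n] by (cases "n < m") (auto simp: Int_commute)
  qed
qed

lemma Union_dyadic_piece: "(\<Union>n. dyadic_piece n) = (UNIV :: 'a::euclidean_space set)"
proof -
  have "\<exists>n. y \<in> dyadic_piece n" for y :: 'a
  proof (cases "norm y \<le> 1")
    case True
    then show ?thesis by (intro exI[of _ 0]) (simp add: dyadic_piece_def)
  next
    case False
    define L where "L = log 2 (norm y)"
    define n where "n = nat \<lceil>L\<rceil>"
    have "1 < norm y" "y \<noteq> 0" using False by auto
    then have L: "L > 0" and y_eq: "norm y = 2 powr L"
      by (simp_all add: L_def)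
    then have "n \<noteq> 0" and "real n - 1 < L" and "L \<le> real n"
      by (simp_all add: n_def) linarith
    then have "2 powr (real n - 1) < norm y" "norm y \<le> 2 powr real n"
      unfolding y_eq by (auto intro: powr_less_mono powr_mono)
    with \<open>n \<noteq> 0\<close> show ?thesis
      by (intro exI[of _ n]) (simp add: dyadic_piece_def annulus_def)
  qed
  then show ?thesis by blast
qed

lemma slice_norm_le_geometric:
  fixes f :: "'a::euclidean_space \<Rightarrow> real"
  assumes f[measurable]: "f \<in> borel_measurable lebesgue" and q: "q \<ge> 1" and r: "r \<ge> 1" and t: "t > 0"
    and \<rho>: "0 < \<rho>" "\<rho> < 1"
    and piece_le: "\<And>n. slice_norm_on (dyadic_piece n) q r t f \<le> D * ennreal (\<rho> ^ n)"
  shows "slice_norm q r t f \<le> D * ennreal (1 / (1 - \<rho>))"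
  unfolding slice_norm_def
proof (rule Lq_norm_suminf_geometric_le[OF q \<rho>])
  show "local_avg r t (\<lambda>y. indicator (dyadic_piece n) y * f y) \<in> borel_measurable lebesgue" for n
    by (rule local_avg_measurable[OF _ t]) measurable
  show "local_avg r t f x \<le> (\<Sum>n. local_avg r t (\<lambda>y. indicator (dyadic_piece n) y * f y) x)" for x
    by (rule local_avg_le_suminf_pieces[OF f sets_lebesgue_dyadic_piece disjoint_family_dyadic_piece
          Union_dyadic_piece r])
  show "Lq_norm q (local_avg r t (\<lambda>y. indicator (dyadic_piece n) y * f y)) \<le> D * ennreal (\<rho> ^ n)" for n
    using piece_le[of n] by (simp add: slice_norm_on_def slice_norm_def)
qed

section \<open>Herz norms\<close>

text \<open>The part \<open>k \<ge> 1\<close> shared by the \<open>P\<close>-th powers of both Herz norms.\<close>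
definition herz_outer_sum :: "real \<Rightarrow> real \<Rightarrow> ennreal \<Rightarrow> real \<Rightarrow> real \<Rightarrow> ('a::euclidean_space \<Rightarrow> real) \<Rightarrow> ennreal" where
  "herz_outer_sum \<alpha> P q r t f =
     (\<Sum>k. ennreal (2 powr (real (Suc k) * \<alpha> * P)) * epowr (slice_norm_on (annulus (int (Suc k))) q r t f) P)"

lemma hom_herz_norm_top:
  "hom_herz_norm \<alpha> top q r t f = (SUP k::int. ennreal (2 powr (real_of_int k * \<alpha>)) * slice_norm_on (annulus k) q r t f)"
  by (simp add: hom_herz_norm_def slice_norm_on_def)

lemma inhom_herz_norm_top:
  "inhom_herz_norm \<alpha> top q r t f = max (slice_norm_on (cball 0 1) q r t f)
     (SUP k\<in>{1::nat..}. ennreal (2 powr (real k * \<alpha>)) * slice_norm_on (annulus (int k)) q r t f)"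
  by (simp add: inhom_herz_norm_def slice_norm_on_def)

lemma nn_integral_count_space_int_split:
  fixes F :: "int \<Rightarrow> ennreal"
  shows "(\<integral>\<^sup>+ k. F k \<partial>count_space UNIV) = (\<Sum>n. F (- int n)) + (\<Sum>n. F (int (Suc n)))"
proof -
  have nonpos: "bij_betw (\<lambda>n::nat. - int n) UNIV {..0}"
    by (rule bij_betwI[where g = "\<lambda>k. nat (- k)"]) auto
  have pos: "bij_betw (\<lambda>n::nat. int (Suc n)) UNIV {0<..}"
    by (rule bij_betwI[where g = "\<lambda>k. nat (k - 1)"]) auto
  have "(\<integral>\<^sup>+ k. F k \<partial>count_space UNIV)
      = (\<integral>\<^sup>+ k. F k * indicator {..0} k + F k * indicator {0<..} k \<partial>count_space UNIV)"
    by (intro nn_integral_cong) (auto simp: indicator_def)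
  also have "\<dots> = (\<integral>\<^sup>+ k. F k \<partial>count_space {..0}) + (\<integral>\<^sup>+ k. F k \<partial>count_space {0<..})"
    by (simp add: nn_integral_add nn_integral_count_space_indicator)
  also have "\<dots> = (\<Sum>n. F (- int n)) + (\<Sum>n. F (int (Suc n)))"
    by (simp add: nn_integral_bij_count_space[OF nonpos, symmetric]
                  nn_integral_bij_count_space[OF pos, symmetric] nn_integral_count_space_nat)
  finally show ?thesis .
qed

lemma epowr_hom_herz_norm:
  assumes "p > 0" "p \<noteq> top"
  shows "epowr (hom_herz_norm \<alpha> p q r t f) (enn2real p)
           = (\<Sum>n. ennreal (2 powr (- real n * \<alpha> * enn2real p)) * epowr (slice_norm_on (annulus (- int n)) q r t f) (enn2real p))
             + herz_outer_sum \<alpha> (enn2real p) q r t f"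
  using assms enn2real_pos[OF assms]
  by (simp add: hom_herz_norm_def slice_norm_on_def herz_outer_sum_def epowr_inverse_epowr
                nn_integral_count_space_int_split)

lemma epowr_inhom_herz_norm:
  assumes "p > 0" "p \<noteq> top"
  shows "epowr (inhom_herz_norm \<alpha> p q r t f) (enn2real p)
           = epowr (slice_norm_on (cball 0 1) q r t f) (enn2real p) + herz_outer_sum \<alpha> (enn2real p) q r t f"
  using assms enn2real_pos[OF assms]
  by (simp add: inhom_herz_norm_def slice_norm_on_def herz_outer_sum_def epowr_inverse_epowr)

lemma ball_part_le_inhom_herz_norm:
  assumes "p > 0"
  shows "slice_norm_on (cball 0 1) q r t f \<le> inhom_herz_norm \<alpha> p q r t f"
proof (cases "p = top")
  case False
  have "epowr (slice_norm_on (cball 0 1) q r t f) (enn2real p) \<le> epowr (inhom_herz_norm \<alpha> p q r t f) (enn2real p)"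
    using False assms by (simp add: epowr_inhom_herz_norm)
  then show ?thesis
    using enn2real_pos[OF assms False] by (simp add: epowr_le_epowr_iff)
qed (simp add: inhom_herz_norm_top)

lemma annulus_part_le_inhom_herz_norm:
  assumes "p > 0" "n \<ge> 1"
  shows "ennreal (2 powr (real n * \<alpha>)) * slice_norm_on (annulus (int n)) q r t f \<le> inhom_herz_norm \<alpha> p q r t f"
proof (cases "p = top")
  case True
  have "ennreal (2 powr (real n * \<alpha>)) * slice_norm_on (annulus (int n)) q r t f
      \<le> (SUP k\<in>{1::nat..}. ennreal (2 powr (real k * \<alpha>)) * slice_norm_on (annulus (int k)) q r t f)"
    using assms by (intro SUP_upper) auto
  then show ?thesis
    using True by (simp add: inhom_herz_norm_top le_max_iff_disj)
next
  case False
  define P where "P = enn2real p"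
  have P: "0 < P" using enn2real_pos[OF assms(1) False] by (simp add: P_def)
  obtain m where m: "n = Suc m" using assms(2) by (cases n) auto
  have "epowr (ennreal (2 powr (real n * \<alpha>)) * slice_norm_on (annulus (int n)) q r t f) P
      = ennreal (2 powr (real (Suc m) * \<alpha> * P)) * epowr (slice_norm_on (annulus (int (Suc m))) q r t f) P"
    using P m by (simp add: epowr_mult epowr_ennreal powr_powr)
  also have "\<dots> \<le> herz_outer_sum \<alpha> P q r t f"
    unfolding herz_outer_sum_def
    by (rule ennreal_le_suminf[where f = "\<lambda>k. ennreal (2 powr (real (Suc k) * \<alpha> * P))
                                             * epowr (slice_norm_on (annulus (int (Suc k))) q r t f) P"])
  also have "\<dots> \<le> epowr (inhom_herz_norm \<alpha> p q r t f) P"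
    using False assms by (simp add: epowr_inhom_herz_norm P_def)
  finally show ?thesis
    using P by (simp add: epowr_le_epowr_iff)
qed

lemma weighted_annulus_part_le_inhom_herz_norm:
  assumes "\<alpha> > 0" "p > 0" "r > 0" "q \<ge> 1"
  shows "ennreal (2 powr (real_of_int k * \<alpha>)) * slice_norm_on (annulus k) q r t f \<le> inhom_herz_norm \<alpha> p q r t f"
proof (cases "k \<le> 0")
  case True
  have "2 powr (real_of_int k * \<alpha>) \<le> 2 powr 0"
    using True assms(1) by (intro powr_mono) (auto simp: mult_nonpos_nonneg)
  then have "ennreal (2 powr (real_of_int k * \<alpha>)) * slice_norm_on (annulus k) q r t f
      \<le> 1 * slice_norm_on (cball 0 1) q r t f"
    using assms True by (intro mult_mono slice_norm_on_mono annulus_subset_cball) auto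
  also have "\<dots> \<le> inhom_herz_norm \<alpha> p q r t f"
    using ball_part_le_inhom_herz_norm[OF assms(2)] by simp
  finally show ?thesis .
next
  case False
  then obtain n where "k = int n" "n \<ge> 1"
    by (intro that[of "nat k"]) auto
  then show ?thesis
    using annulus_part_le_inhom_herz_norm[OF assms(2)] by simp
qed

lemma slice_norm_le_inhom_herz_norm:
  fixes f :: "'a::euclidean_space \<Rightarrow> real"
  assumes "\<alpha> > 0" "t > 0" "p > 0" "r \<ge> 1" "q \<ge> 1" and f: "f \<in> borel_measurable lebesgue"
  shows "slice_norm q r t f \<le> inhom_herz_norm \<alpha> p q r t f * ennreal (1 / (1 - 2 powr (- \<alpha>)))"
proof (rule slice_norm_le_geometric[OF f])
  show "2 powr (- \<alpha>) < 1"
    using assms(1) by (simp add: powr_less_one)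
  fix n :: nat
  show "slice_norm_on (dyadic_piece n) q r t f \<le> inhom_herz_norm \<alpha> p q r t f * ennreal ((2 powr (- \<alpha>)) ^ n)"
  proof (cases "n = 0")
    case True
    then show ?thesis
      using ball_part_le_inhom_herz_norm[OF assms(3)] by (simp add: dyadic_piece_def)
  next
    case False
    have "(2 powr (- \<alpha>)) ^ n * 2 powr (real n * \<alpha>) = 1"
      by (simp add: powr_power powr_add[symmetric])
    then have "slice_norm_on (dyadic_piece n) q r t f
        = ennreal ((2 powr (- \<alpha>)) ^ n) * (ennreal (2 powr (real n * \<alpha>)) * slice_norm_on (annulus (int n)) q r t f)"
      using False by (simp add: dyadic_piece_def mult.assoc[symmetric] ennreal_mult[symmetric])
    also have "\<dots> \<le> ennreal ((2 powr (- \<alpha>)) ^ n) * inhom_herz_norm \<alpha> p q r t f"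
      using False by (intro mult_left_mono annulus_part_le_inhom_herz_norm[OF assms(3)]) auto
    finally show ?thesis
      by (simp add: mult.commute)
  qed
qed (use assms in auto)

text \<open>For \<open>k \<le> 0\<close> the annuli lie in the unit ball, and their weights \<open>2\<^sup>k\<^sup>\<alpha>\<^sup>P\<close> sum geometrically.\<close>
lemma herz_inner_sum_le:
  assumes "\<alpha> > 0" "P > 0" "r > 0" "q \<ge> 1"
  shows "(\<Sum>n. ennreal (2 powr (- real n * \<alpha> * P)) * epowr (slice_norm_on (annulus (- int n)) q r t f) P)
           \<le> ennreal (1 / (1 - 2 powr (- \<alpha> * P))) * epowr (slice_norm_on (cball 0 1) q r t f) P"
proof -
  define \<sigma> where "\<sigma> = 2 powr (- \<alpha> * P)"
  have \<sigma>: "0 < \<sigma>" "\<sigma> < 1"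
    using assms by (auto simp: \<sigma>_def powr_less_one)
  have "ennreal (2 powr (- real n * \<alpha> * P)) * epowr (slice_norm_on (annulus (- int n)) q r t f) P
      \<le> ennreal (\<sigma> ^ n) * epowr (slice_norm_on (cball 0 1) q r t f) P" for n
  proof (intro mult_mono epowr_mono slice_norm_on_mono annulus_subset_cball)
    show "ennreal (2 powr (- real n * \<alpha> * P)) \<le> ennreal (\<sigma> ^ n)"
      by (simp add: \<sigma>_def powr_power mult.assoc)
  qed (use assms in auto)
  then have "(\<Sum>n. ennreal (2 powr (- real n * \<alpha> * P)) * epowr (slice_norm_on (annulus (- int n)) q r t f) P)
      \<le> (\<Sum>n. ennreal (\<sigma> ^ n) * epowr (slice_norm_on (cball 0 1) q r t f) P)"
    by (intro suminf_le) auto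
  also have "\<dots> = ennreal (1 / (1 - \<sigma>)) * epowr (slice_norm_on (cball 0 1) q r t f) P"
    using \<sigma> by (simp only: ennreal_suminf_multc suminf_geometric_ennreal less_imp_le)
  finally show ?thesis
    by (simp add: \<sigma>_def)
qed

lemma hom_herz_norm_le_inhom_herz_norm:
  assumes \<alpha>: "\<alpha> > 0" and p: "p > 0" and "r > 0" "q \<ge> 1"
  obtains C where "C > 0" "\<And>f. hom_herz_norm \<alpha> p q r t f \<le> ennreal C * inhom_herz_norm \<alpha> p q r t f"
proof (cases "p = top")
  case True
  have "hom_herz_norm \<alpha> p q r t f \<le> inhom_herz_norm \<alpha> p q r t f" for f
    using True weighted_annulus_part_le_inhom_herz_norm[OF assms] by (auto simp: hom_herz_norm_top intro!: SUP_least)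
  then show ?thesis
    by (intro that[of 1]) simp_all
next
  case False
  define P where "P = enn2real p"
  define K where "K = 1 / (1 - 2 powr (- \<alpha> * P))"
  have P: "0 < P" using enn2real_pos[OF p False] by (simp add: P_def)
  have K: "1 \<le> K" using \<alpha> P by (simp add: K_def powr_less_one field_simps)
  have bound: "hom_herz_norm \<alpha> p q r t f \<le> ennreal (K powr (1 / P)) * inhom_herz_norm \<alpha> p q r t f" for f
  proof -
    let ?b = "epowr (slice_norm_on (cball 0 1) q r t f) P" and ?S = "herz_outer_sum \<alpha> P q r t f"
    have "epowr (hom_herz_norm \<alpha> p q r t f) P
        = (\<Sum>n. ennreal (2 powr (- real n * \<alpha> * P)) * epowr (slice_norm_on (annulus (- int n)) q r t f) P) + ?S"
      unfolding P_def by (rule epowr_hom_herz_norm[OF p False])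
    also have "\<dots> \<le> ennreal K * ?b + ?S"
      unfolding K_def by (rule add_right_mono[OF herz_inner_sum_le[OF \<alpha> P assms(3,4)]])
    also have "\<dots> \<le> ennreal K * (?b + ?S)"
      using K by (simp add: distrib_left mult_right_mono[of 1 "ennreal K" ?S, simplified])
    also have "\<dots> = epowr (ennreal (K powr (1 / P)) * inhom_herz_norm \<alpha> p q r t f) P"
      using P K by (simp add: epowr_mult epowr_ennreal powr_powr epowr_inhom_herz_norm[OF p False] P_def)
    finally show ?thesis
      using P by (simp add: epowr_le_epowr_iff)
  qed
  show ?thesis
    by (rule that[OF _ bound]) (use K in simp)
qed

lemma inhom_herz_norm_le_hom_herz_norm_plus_slice_norm:
  assumes p: "p > 0" and "r > 0" "q \<ge> 1"
  obtains C where "C > 0"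
    "\<And>f. inhom_herz_norm \<alpha> p q r t f \<le> ennreal C * (hom_herz_norm \<alpha> p q r t f + slice_norm q r t f)"
proof (cases "p = top")
  case True
  have "inhom_herz_norm \<alpha> p q r t f \<le> hom_herz_norm \<alpha> p q r t f + slice_norm q r t f" for f
  proof -
    have "slice_norm_on (cball 0 1) q r t f \<le> hom_herz_norm \<alpha> p q r t f + slice_norm q r t f"
      using assms by (intro add_increasing slice_norm_on_le_slice_norm) auto
    moreover have "ennreal (2 powr (real k * \<alpha>)) * slice_norm_on (annulus (int k)) q r t f
        \<le> hom_herz_norm \<alpha> p q r t f + slice_norm q r t f" for k
      unfolding True hom_herz_norm_top by (intro add_increasing2 SUP_upper2[of "int k"]) auto
    ultimately show ?thesis
      using True by (simp add: inhom_herz_norm_top SUP_least)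
  qed
  then show ?thesis by (intro that[of 1]) simp_all
next
  case False
  define P where "P = enn2real p"
  have P: "0 < P" using enn2real_pos[OF p False] by (simp add: P_def)
  have "inhom_herz_norm \<alpha> p q r t f \<le> ennreal (2 powr (1 / P)) * (hom_herz_norm \<alpha> p q r t f + slice_norm q r t f)" for f
  proof -
    have "epowr (inhom_herz_norm \<alpha> p q r t f) P
        = epowr (slice_norm_on (cball 0 1) q r t f) P + herz_outer_sum \<alpha> P q r t f"
      unfolding P_def by (rule epowr_inhom_herz_norm[OF p False])
    also have "\<dots> \<le> epowr (slice_norm q r t f) P + epowr (hom_herz_norm \<alpha> p q r t f) P"
    proof (rule add_mono)
      show "epowr (slice_norm_on (cball 0 1) q r t f) P \<le> epowr (slice_norm q r t f) P"
        using P assms by (intro epowr_mono slice_norm_on_le_slice_norm) auto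
      show "herz_outer_sum \<alpha> P q r t f \<le> epowr (hom_herz_norm \<alpha> p q r t f) P"
        unfolding P_def epowr_hom_herz_norm[OF p False] by (rule add_increasing) simp_all
    qed
    finally have "inhom_herz_norm \<alpha> p q r t f \<le> epowr (epowr (slice_norm q r t f) P + epowr (hom_herz_norm \<alpha> p q r t f) P) (1 / P)"
      using P by (metis epowr_epowr_inverse epowr_mono divide_pos_pos zero_less_one)
    also have "\<dots> \<le> ennreal (2 powr (1 / P)) * (slice_norm q r t f + hom_herz_norm \<alpha> p q r t f)"
      by (rule epowr_add_epowr_le[OF P])
    finally show ?thesis
      by (simp add: add.commute)
  qed
  then show ?thesis by (intro that[of "2 powr (1 / P)"]) simp_all
qed

lemma herz_norms_equivalent:
  assumes "\<alpha> > 0" "t > 0" "p > 0" "r > 1" "q \<ge> 1"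
  obtains C where "C > 0"
    "\<And>f::'a::euclidean_space \<Rightarrow> real. f \<in> borel_measurable lebesgue \<Longrightarrow>
       hom_herz_norm \<alpha> p q r t f + slice_norm q r t f \<le> ennreal C * inhom_herz_norm \<alpha> p q r t f"
    "\<And>f::'a \<Rightarrow> real. inhom_herz_norm \<alpha> p q r t f \<le> ennreal C * (hom_herz_norm \<alpha> p q r t f + slice_norm q r t f)"
proof -
  have r: "r > 0" "r \<ge> 1" using assms(4) by auto
  obtain C\<^sub>1 where C\<^sub>1: "C\<^sub>1 > 0" "\<And>f::'a \<Rightarrow> real. hom_herz_norm \<alpha> p q r t f \<le> ennreal C\<^sub>1 * inhom_herz_norm \<alpha> p q r t f"
    using hom_herz_norm_le_inhom_herz_norm[OF assms(1,3) r(1) assms(5)] by blast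
  obtain C\<^sub>2 where C\<^sub>2: "C\<^sub>2 > 0"
    "\<And>f::'a \<Rightarrow> real. inhom_herz_norm \<alpha> p q r t f \<le> ennreal C\<^sub>2 * (hom_herz_norm \<alpha> p q r t f + slice_norm q r t f)"
    using inhom_herz_norm_le_hom_herz_norm_plus_slice_norm[OF assms(3) r(1) assms(5)] by blast
  define C\<^sub>0 where "C\<^sub>0 = 1 / (1 - 2 powr (- \<alpha>))"
  have C\<^sub>0: "C\<^sub>0 > 0" using assms(1) by (simp add: C\<^sub>0_def powr_less_one)
  define C where "C = max (C\<^sub>1 + C\<^sub>0) C\<^sub>2"
  show ?thesis
  proof (rule that[of C])
    show "C > 0" using C\<^sub>1(1) by (simp add: C_def less_max_iff_disj add_pos_pos C\<^sub>0)
    fix f :: "'a \<Rightarrow> real"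
    assume "f \<in> borel_measurable lebesgue"
    then have "hom_herz_norm \<alpha> p q r t f + slice_norm q r t f
        \<le> ennreal C\<^sub>1 * inhom_herz_norm \<alpha> p q r t f + inhom_herz_norm \<alpha> p q r t f * ennreal C\<^sub>0"
      unfolding C\<^sub>0_def using assms r by (intro add_mono C\<^sub>1(2) slice_norm_le_inhom_herz_norm)
    also have "\<dots> = ennreal (C\<^sub>1 + C\<^sub>0) * inhom_herz_norm \<alpha> p q r t f"
      using C\<^sub>1(1) C\<^sub>0 by (simp add: ennreal_plus distrib_right mult.commute)
    also have "\<dots> \<le> ennreal C * inhom_herz_norm \<alpha> p q r t f"
      by (intro mult_right_mono ennreal_leI) (simp_all add: C_def)
    finally show "hom_herz_norm \<alpha> p q r t f + slice_norm q r t f \<le> ennreal C * inhom_herz_norm \<alpha> p q r t f" .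
  next
    fix f :: "'a \<Rightarrow> real"
    show "inhom_herz_norm \<alpha> p q r t f \<le> ennreal C * (hom_herz_norm \<alpha> p q r t f + slice_norm q r t f)"
      using C\<^sub>2(2)[of f] by (rule order_trans) (intro mult_right_mono ennreal_leI, simp_all add: C_def)
  qed
qed

theorem proposition3p3:
  fixes \<alpha> t r :: real and p q :: ennreal
  assumes "\<alpha> > 0" and "t > 0" and "p > 0" and "r > 1" and "q \<ge> 1"
  shows "(inhom_herz_space \<alpha> p q r t :: ('a::euclidean_space \<Rightarrow> real) set)
           = hom_herz_space \<alpha> p q r t \<inter> slice_space q r t
         \<and> (\<exists>C::real. C > 0 \<and>
           (\<forall>f :: 'a::euclidean_space \<Rightarrow> real. f \<in> hom_herz_space \<alpha> p q r t \<inter> slice_space q r t \<longrightarrow>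
              ennreal (1 / C) * (hom_herz_norm \<alpha> p q r t f + slice_norm q r t f) \<le> inhom_herz_norm \<alpha> p q r t f
            \<and> inhom_herz_norm \<alpha> p q r t f \<le> ennreal C * (hom_herz_norm \<alpha> p q r t f + slice_norm q r t f)))"
proof -
  obtain C where C: "C > 0"
    and lower: "\<And>f::'a \<Rightarrow> real. f \<in> borel_measurable lebesgue \<Longrightarrow>
                  hom_herz_norm \<alpha> p q r t f + slice_norm q r t f \<le> ennreal C * inhom_herz_norm \<alpha> p q r t f"
    and upper: "\<And>f::'a \<Rightarrow> real.
                  inhom_herz_norm \<alpha> p q r t f \<le> ennreal C * (hom_herz_norm \<alpha> p q r t f + slice_norm q r t f)"
    using herz_norms_equivalent[OF assms] by blast
  note comparable = comparable_ennreal[OF C lower upper]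
  have "f \<in> inhom_herz_space \<alpha> p q r t \<longleftrightarrow> f \<in> hom_herz_space \<alpha> p q r t \<inter> slice_space q r t" for f :: "'a \<Rightarrow> real"
    using comparable(1)[of f]
    by (auto simp: inhom_herz_space_def hom_herz_space_def slice_space_def)
  moreover have "ennreal (1 / C) * (hom_herz_norm \<alpha> p q r t f + slice_norm q r t f) \<le> inhom_herz_norm \<alpha> p q r t f"
    if "f \<in> hom_herz_space \<alpha> p q r t" for f :: "'a \<Rightarrow> real"
    using that comparable(2) by (simp add: hom_herz_space_def)
  ultimately show ?thesis
    using C upper by blast
qed

end
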